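(* Let $c>0$ be fixed, let $k\in\mathbb{N}$, let $\phi_k(x)=(x^2+c^2)^{k-1/2}$, and let $1\le p<\infty$. Let $\{x_j\}_{j\in\mathbb{Z}}\subset\mathbb{R}$ be a scattered sequence. Then for every $\epsilon>0$ and every continuous function $f:[a,b]\to\mathbb{R}$ there exist $N\in\mathbb{N}$ and real coefficients $a_1,\dots,a_N$ such that \[ \left\|f-\sum_{j=1}^{N}a_j\phi_k(\cdot-x_j)\right\|_{L^p([a,b])}<\epsilon . \]
   Context: A sequence $\mathcal{X}$ of real numbers is $\delta$-separated if $\inf_{x,y\in\mathcal{X},\,x\neq y}|x-y|=\delta>0$. A sequence $\{x_j\}_{j\in\mathbb{Z}}\subset\mathbb{R}$ is called scattered if it is $\delta$-separated for some $\delta>0$ and $\lim_{j\to\pm\infty}x_j=\pm\infty$. *)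

theory Defs
  imports "HOL-Analysis.Analysis"
begin

definition separated_by :: "real set \<Rightarrow> real \<Rightarrow> bool" where
  "separated_by X \<delta> \<longleftrightarrow> Inf {\<bar>x - y\<bar> | x y. x \<in> X \<and> y \<in> X \<and> x \<noteq> y} = \<delta> \<and> \<delta> > 0"

definition scattered :: "(int \<Rightarrow> real) \<Rightarrow> bool" where
  "scattered x \<longleftrightarrow> (\<exists>\<delta>. separated_by (range x) \<delta>)
     \<and> filterlim x at_top at_top \<and> filterlim x at_bot at_bot"

definition mq :: "real \<Rightarrow> nat \<Rightarrow> real \<Rightarrow> real" where
  "mq c k t = (t\<^sup>2 + c\<^sup>2) powr (real k - 1/2)"

definition Lp_norm_on :: "real \<Rightarrow> real \<Rightarrow> real \<Rightarrow> (real \<Rightarrow> real) \<Rightarrow> real" where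
  "Lp_norm_on p a b g = (LINT t:{a..b}|lborel. \<bar>g t\<bar> powr p) powr (1 / p)"

end

theory Submission
  imports Defs
begin

text \<open>
  For t in a bounded set and y \<rightarrow> \<infinity>, the multiquadric ((t - y)^2 + c^2) powr \<alpha> has an
  asymptotic expansion \<Sum>m. P m t * y powr (2\<alpha> - m) whose coefficients P m are polynomials.
  Since x j \<rightarrow> \<infinity>, translates by arbitrarily large y = x j are available, and
  P m t = y powr (m - 2\<alpha>) * (\<phi>(t - y) - \<Sum>l<m. P l t * y powr (2\<alpha> - l)) + O(1/y),
  so by induction on m every P m is a uniform limit of linear combinations of translates.
  For \<alpha> = k - 1/2 the number 2\<alpha> is an odd integer, which makes P (2k + d) a nonzero multiple
  of t^d plus lower powers. Hence all polynomials, and by Weierstrass all continuous functions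
  on [a,b], are uniform limits of such combinations, and uniform approximation on [a,b]
  controls the L^p norm.
\<close>

lemma summable_abs_gbinomial_half:
  fixes a :: real
  shows "summable (\<lambda>i. \<bar>a gchoose i\<bar> * (1/2)^i)"
proof -
  have "conv_radius (\<lambda>i. \<bar>a gchoose i\<bar>) = conv_radius (\<lambda>i. a gchoose i)"
    using conv_radius_norm[of "\<lambda>i. a gchoose i"] by (simp only: real_norm_def)
  then have "ereal (norm (1/2::real)) < conv_radius (\<lambda>i. \<bar>a gchoose i\<bar>)"
    using conv_radius_gchoose[of a] by (simp add: one_ereal_def)
  from summable_in_conv_radius[OF this] show ?thesis .
qed

lemma gen_binomial_remainder_bound:
  fixes a :: real and L :: nat
  obtains K where "K \<ge> 0" and "\<And>u. \<bar>u\<bar> \<le> 1/2 \<Longrightarrow>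
     \<bar>(1+u) powr a - (\<Sum>i\<le>L. (a gchoose i) * u^i)\<bar> \<le> K * \<bar>u\<bar>^Suc L"
proof -
  define g where "g i = \<bar>a gchoose (i + Suc L)\<bar> * (1/2)^i" for i
  have "summable (\<lambda>i. 2^Suc L * (\<bar>a gchoose (i + Suc L)\<bar> * (1/2)^(i + Suc L)))"
    using summable_iff_shift[of "\<lambda>i. \<bar>a gchoose i\<bar> * (1/2)^i" "Suc L"]
      summable_abs_gbinomial_half[of a] by (intro summable_mult) simp
  moreover have "(\<lambda>i. 2^Suc L * (\<bar>a gchoose (i + Suc L)\<bar> * (1/2)^(i + Suc L))) = g"
    by (auto simp: g_def power_add field_simps)
  ultimately have g: "summable g" by metis
  show ?thesis
  proof
    show "suminf g \<ge> 0" using g by (intro suminf_nonneg) (auto simp: g_def)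
    fix u :: real assume u: "\<bar>u\<bar> \<le> 1/2"
    define R where "R = (1+u) powr a - (\<Sum>i\<le>L. (a gchoose i) * u^i)"
    have "(\<lambda>i. (a gchoose i) * u^i) sums (1+u) powr a"
      using u by (intro gen_binomial_real) simp
    then have "(\<lambda>i. (a gchoose (i + Suc L)) * u^(i + Suc L)) sums R"
      by (subst sums_iff_shift) (simp add: R_def lessThan_Suc_atMost)
    then have tail: "(\<lambda>i. u^Suc L * ((a gchoose (i + Suc L)) * u^i)) sums R"
      by (simp add: power_add mult_ac)
    have bound: "\<bar>(a gchoose (i + Suc L)) * u^i\<bar> \<le> g i" for i
      unfolding g_def abs_mult power_abs by (intro mult_left_mono power_mono) (use u in auto)
    have abs_summable: "summable (\<lambda>i. \<bar>(a gchoose (i + Suc L)) * u^i\<bar>)"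
      by (rule summable_comparison_test'[OF g, of 0]) (use bound in simp)
    then have "summable (\<lambda>i. (a gchoose (i + Suc L)) * u^i)"
      by (rule summable_rabs_cancel)
    then have "R = u^Suc L * (\<Sum>i. (a gchoose (i + Suc L)) * u^i)"
      using tail by (metis suminf_mult sums_unique)
    also have "\<bar>\<dots>\<bar> \<le> \<bar>u\<bar>^Suc L * suminf g"
      unfolding abs_mult power_abs
      using summable_rabs[OF abs_summable] suminf_le[OF bound abs_summable g]
      by (intro mult_left_mono) auto
    finally show "\<bar>(1+u) powr a - (\<Sum>i\<le>L. (a gchoose i) * u^i)\<bar> \<le> suminf g * \<bar>u\<bar>^Suc L"
      by (simp add: R_def mult.commute)
  qed
qed

lemma shifted_powr_expansion:
  fixes e T :: real and L :: nat
  assumes "T \<ge> 0"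
  obtains K where "\<And>y t. 0 < y \<Longrightarrow> 2 * T \<le> y \<Longrightarrow> \<bar>t\<bar> \<le> T \<Longrightarrow>
     \<bar>(y - t) powr e - (\<Sum>i\<le>L. (e gchoose i) * (-t)^i * y powr (e - real i))\<bar>
       \<le> K * y powr (e - real (Suc L))"
proof -
  obtain K where K: "K \<ge> 0" "\<And>u. \<bar>u\<bar> \<le> 1/2 \<Longrightarrow>
      \<bar>(1+u) powr e - (\<Sum>i\<le>L. (e gchoose i) * u^i)\<bar> \<le> K * \<bar>u\<bar>^Suc L"
    using gen_binomial_remainder_bound by blast
  show ?thesis
  proof
    fix y t :: real assume y: "0 < y" "2 * T \<le> y" and t: "\<bar>t\<bar> \<le> T"
    define u where "u = -t / y"
    have u: "\<bar>u\<bar> \<le> 1/2" "\<bar>u\<bar> \<le> T / y"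
      using y t by (auto simp: u_def abs_divide divide_le_eq divide_right_mono)
    have "y - t = y * (1 + u)" using y by (simp add: u_def field_simps)
    then have "(y - t) powr e = y powr e * (1 + u) powr e"
      using y u by (simp add: powr_mult)
    moreover have "(\<Sum>i\<le>L. (e gchoose i) * (-t)^i * y powr (e - real i))
        = y powr e * (\<Sum>i\<le>L. (e gchoose i) * u^i)"
      unfolding sum_distrib_left
    proof (intro sum.cong refl)
      fix i
      have "u^i = (-t)^i / y^i" unfolding u_def power_divide[symmetric] by simp
      then show "(e gchoose i) * (-t)^i * y powr (e - real i) = y powr e * ((e gchoose i) * u^i)"
        using y by (simp add: powr_diff powr_realpow)
    qed
    ultimately have "\<bar>(y - t) powr e - (\<Sum>i\<le>L. (e gchoose i) * (-t)^i * y powr (e - real i))\<bar>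
        = y powr e * \<bar>(1 + u) powr e - (\<Sum>i\<le>L. (e gchoose i) * u^i)\<bar>"
      using y by (simp add: abs_mult flip: right_diff_distrib)
    also have "\<dots> \<le> y powr e * (K * (T / y)^Suc L)"
      using K u by (intro mult_left_mono order.trans[OF K(2)] mult_left_mono power_mono) auto
    also have "\<dots> = (K * T^Suc L) * y powr (e - real (Suc L))"
      using y by (simp add: power_divide powr_diff powr_realpow del: of_nat_Suc)
    finally show "\<bar>(y - t) powr e - (\<Sum>i\<le>L. (e gchoose i) * (-t)^i * y powr (e - real i))\<bar>
       \<le> (K * T^Suc L) * y powr (e - real (Suc L))" .
  qed
qed

lemma multiquadric_powr_expansion:
  fixes \<alpha> c :: real and N :: nat
  obtains K where "\<And>z. 0 < z \<Longrightarrow> 2 * c^2 \<le> z^2 \<Longrightarrow>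
     \<bar>(z^2 + c^2) powr \<alpha> - (\<Sum>n\<le>N. (\<alpha> gchoose n) * c^(2*n) * z powr (2*\<alpha> - real (2*n)))\<bar>
       \<le> K * z powr (2*\<alpha> - real (2 * Suc N))"
proof -
  obtain K where K: "K \<ge> 0" "\<And>w. \<bar>w\<bar> \<le> 1/2 \<Longrightarrow>
      \<bar>(1+w) powr \<alpha> - (\<Sum>n\<le>N. (\<alpha> gchoose n) * w^n)\<bar> \<le> K * \<bar>w\<bar>^Suc N"
    using gen_binomial_remainder_bound by blast
  show ?thesis
  proof
    fix z :: real assume z: "0 < z" "2 * c^2 \<le> z^2"
    define w where "w = c^2 / z^2"
    have w: "0 \<le> w" "w \<le> 1/2" using z by (auto simp: w_def divide_le_eq)
    have "z^2 + c^2 = z^2 * (1 + w)" using z by (simp add: w_def field_simps)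
    then have "(z^2 + c^2) powr \<alpha> = (z^2) powr \<alpha> * (1 + w) powr \<alpha>"
      using w by (simp add: powr_mult)
    also have "(z^2) powr \<alpha> = z powr (2*\<alpha>)"
      using z by (simp add: powr_powr flip: powr_numeral)
    finally have lhs: "(z^2 + c^2) powr \<alpha> = z powr (2*\<alpha>) * (1 + w) powr \<alpha>" .
    have wpow: "w^n = c^(2*n) / z^(2*n)" for n
      unfolding w_def power_divide power_mult by simp
    have "(\<Sum>n\<le>N. (\<alpha> gchoose n) * c^(2*n) * z powr (2*\<alpha> - real (2*n)))
        = z powr (2*\<alpha>) * (\<Sum>n\<le>N. (\<alpha> gchoose n) * w^n)"
      unfolding sum_distrib_left wpow using z
      by (intro sum.cong refl) (simp add: powr_diff powr_realpow del: of_nat_mult)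
    then have "\<bar>(z^2 + c^2) powr \<alpha> - (\<Sum>n\<le>N. (\<alpha> gchoose n) * c^(2*n) * z powr (2*\<alpha> - real (2*n)))\<bar>
        = \<bar>z powr (2*\<alpha>) * ((1 + w) powr \<alpha> - (\<Sum>n\<le>N. (\<alpha> gchoose n) * w^n))\<bar>"
      by (simp only: lhs right_diff_distrib)
    also have "\<dots> = z powr (2*\<alpha>) * \<bar>(1 + w) powr \<alpha> - (\<Sum>n\<le>N. (\<alpha> gchoose n) * w^n)\<bar>"
      by (simp add: abs_mult)
    also have "\<dots> \<le> z powr (2*\<alpha>) * (K * w^Suc N)"
      using K(2)[of w] w by (intro mult_left_mono) auto
    also have "\<dots> = (K * c^(2 * Suc N)) * z powr (2*\<alpha> - real (2 * Suc N))"
      unfolding wpow using z by (simp add: powr_diff powr_realpow del: of_nat_Suc of_nat_mult)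
    finally show "\<bar>(z^2 + c^2) powr \<alpha> - (\<Sum>n\<le>N. (\<alpha> gchoose n) * c^(2*n) * z powr (2*\<alpha> - real (2*n)))\<bar>
       \<le> (K * c^(2 * Suc N)) * z powr (2*\<alpha> - real (2 * Suc N))" .
  qed
qed

lemma powr_le_of_comparable_base:
  fixes y z e :: real
  assumes "0 < y" "y/2 \<le> z" "z \<le> 2*y"
  shows "z powr e \<le> 2 powr \<bar>e\<bar> * y powr e"
proof (cases "e \<ge> 0")
  case True
  have "z powr e \<le> (2*y) powr e" using assms True by (intro powr_mono2) auto
  then show ?thesis using assms True by (simp add: powr_mult)
next
  case False
  have "z powr e \<le> (y/2) powr e" using assms False by (intro powr_mono2') auto
  also have "\<dots> = 2 powr (-e) * y powr e" using assms by (simp add: powr_divide powr_minus field_simps)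
  finally show ?thesis using False by simp
qed

lemma sum_atMost_div2_reindex:
  fixes F :: "nat \<Rightarrow> nat \<Rightarrow> 'a::comm_monoid_add" and M :: nat
  shows "(\<Sum>m\<le>M. \<Sum>n\<le>m div 2. F n (m - 2*n)) = (\<Sum>n\<le>M div 2. \<Sum>i\<le>M - 2*n. F n i)"
proof -
  have "(\<Sum>m\<le>M. \<Sum>n\<le>m div 2. F n (m - 2*n)) = (\<Sum>(m,n)\<in>Sigma {..M} (\<lambda>m. {..m div 2}). F n (m - 2*n))"
    by (rule sum.Sigma) auto
  also have "\<dots> = (\<Sum>(n,i)\<in>Sigma {..M div 2} (\<lambda>n. {..M - 2*n}). F n i)"
    by (rule sum.reindex_bij_witness[where i="\<lambda>(n,i). (2*n+i, n)" and j="\<lambda>(m,n). (n, m-2*n)"])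
      auto
  also have "\<dots> = (\<Sum>n\<le>M div 2. \<Sum>i\<le>M - 2*n. F n i)"
    by (rule sum.Sigma[symmetric]) auto
  finally show ?thesis .
qed

text \<open>
  The coefficient P_m: expand (z^2 + c^2) powr \<alpha> in powers of c^2/z^2 with z = y - t, then each
  z powr (2\<alpha> - 2n) in powers of t/y, and collect the power y powr (2\<alpha> - m).
\<close>
definition multiquadric_coeff :: "real \<Rightarrow> real \<Rightarrow> nat \<Rightarrow> real \<Rightarrow> real" where
  "multiquadric_coeff c \<alpha> m t = (\<Sum>n\<le>m div 2. (\<alpha> gchoose n) * c^(2*n)
      * ((2*\<alpha> - real (2*n)) gchoose (m - 2*n)) * (-t)^(m - 2*n))"

lemma sum_multiquadric_coeff:
  fixes M :: nat
  shows "(\<Sum>n\<le>M div 2. (\<alpha> gchoose n) * c^(2*n) * (\<Sum>i\<le>M - 2*n.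
       ((2*\<alpha> - real (2*n)) gchoose i) * (-t)^i * y powr (2*\<alpha> - real (2*n) - real i)))
   = (\<Sum>m\<le>M. multiquadric_coeff c \<alpha> m t * y powr (2*\<alpha> - real m))"
proof -
  define F where "F n i = (\<alpha> gchoose n) * c^(2*n) *
      (((2*\<alpha> - real (2*n)) gchoose i) * (-t)^i * y powr (2*\<alpha> - real (2*n) - real i))" for n i
  have "(\<Sum>m\<le>M. multiquadric_coeff c \<alpha> m t * y powr (2*\<alpha> - real m))
      = (\<Sum>m\<le>M. \<Sum>n\<le>m div 2. F n (m - 2*n))"
    unfolding multiquadric_coeff_def sum_distrib_right
  proof (intro sum.cong refl)
    fix m n :: nat assume "n \<in> {..m div 2}"
    then have "real (2*n) + real (m - 2*n) = real m" by auto
    then show "(\<alpha> gchoose n) * c^(2*n) * ((2*\<alpha> - real (2*n)) gchoose (m - 2*n)) * (-t)^(m - 2*n)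
        * y powr (2*\<alpha> - real m) = F n (m - 2*n)"
      by (simp add: F_def algebra_simps)
  qed
  also have "\<dots> = (\<Sum>n\<le>M div 2. \<Sum>i\<le>M - 2*n. F n i)"
    by (rule sum_atMost_div2_reindex)
  finally show ?thesis by (simp add: F_def sum_distrib_left)
qed

lemma multiquadric_coeff_expansion_error:
  fixes M :: nat and E KB :: real and KA :: "nat \<Rightarrow> real"
  assumes shifted: "\<And>n. n \<le> M div 2 \<Longrightarrow>
      \<bar>(y - t) powr (2*\<alpha> - real (2*n)) - (\<Sum>i\<le>M - 2*n.
         ((2*\<alpha> - real (2*n)) gchoose i) * (-t)^i * y powr (2*\<alpha> - real (2*n) - real i))\<bar>
        \<le> KA n * y powr E"
    and far: "\<bar>((y - t)^2 + c^2) powr \<alpha>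
        - (\<Sum>n\<le>M div 2. (\<alpha> gchoose n) * c^(2*n) * (y - t) powr (2*\<alpha> - real (2*n)))\<bar>
        \<le> KB * y powr E"
  shows "\<bar>((t - y)^2 + c^2) powr \<alpha> - (\<Sum>m\<le>M. multiquadric_coeff c \<alpha> m t * y powr (2*\<alpha> - real m))\<bar>
      \<le> ((\<Sum>n\<le>M div 2. \<bar>(\<alpha> gchoose n) * c^(2*n)\<bar> * KA n) + KB) * y powr E"
proof -
  define b where "b n = (\<alpha> gchoose n) * c^(2*n)" for n
  define S where "S n = (\<Sum>i\<le>M - 2*n.
      ((2*\<alpha> - real (2*n)) gchoose i) * (-t)^i * y powr (2*\<alpha> - real (2*n) - real i))" for n
  define EA where "EA n = (y - t) powr (2*\<alpha> - real (2*n)) - S n" for n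
  define EB where "EB = ((y - t)^2 + c^2) powr \<alpha> - (\<Sum>n\<le>M div 2. b n * (y - t) powr (2*\<alpha> - real (2*n)))"
  have "(\<Sum>m\<le>M. multiquadric_coeff c \<alpha> m t * y powr (2*\<alpha> - real m)) = (\<Sum>n\<le>M div 2. b n * S n)"
    unfolding sum_multiquadric_coeff[symmetric] by (simp add: S_def b_def)
  moreover have "((t - y)^2 + c^2) powr \<alpha> = (\<Sum>n\<le>M div 2. b n * (S n + EA n)) + EB"
    by (simp add: EA_def EB_def power2_commute)
  ultimately have "((t - y)^2 + c^2) powr \<alpha> - (\<Sum>m\<le>M. multiquadric_coeff c \<alpha> m t * y powr (2*\<alpha> - real m))
      = (\<Sum>n\<le>M div 2. b n * EA n) + EB"
    by (simp add: distrib_left sum.distrib)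
  also have "\<bar>\<dots>\<bar> \<le> (\<Sum>n\<le>M div 2. \<bar>b n\<bar> * (KA n * y powr E)) + KB * y powr E"
    using shifted far unfolding EA_def EB_def S_def b_def
    by (intro order.trans[OF abs_triangle_ineq] add_mono order.trans[OF sum_abs] sum_mono)
      (auto simp: abs_mult intro: mult_left_mono)
  also have "\<dots> = ((\<Sum>n\<le>M div 2. \<bar>b n\<bar> * KA n) + KB) * y powr E"
    by (simp add: sum_distrib_right distrib_right mult.assoc)
  finally show ?thesis unfolding b_def .
qed

lemma multiquadric_asymptotic_expansion:
  fixes c \<alpha> T :: real and M :: nat
  assumes "T \<ge> 0"
  obtains C where "\<forall>\<^sub>F y in at_top. \<forall>t. \<bar>t\<bar> \<le> T \<longrightarrow>
      \<bar>((t - y)^2 + c^2) powr \<alpha> - (\<Sum>m\<le>M. multiquadric_coeff c \<alpha> m t * y powr (2*\<alpha> - real m))\<bar>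
        \<le> C * y powr (2*\<alpha> - real (Suc M))"
proof -
  define N where "N = M div 2"
  define e where "e n = 2*\<alpha> - real (2*n)" for n
  define E where "E = 2*\<alpha> - real (Suc M)"
  obtain KB where KB: "\<And>z. 0 < z \<Longrightarrow> 2 * c^2 \<le> z^2 \<Longrightarrow>
      \<bar>(z^2 + c^2) powr \<alpha> - (\<Sum>n\<le>N. (\<alpha> gchoose n) * c^(2*n) * z powr e n)\<bar> \<le> KB * z powr e (Suc N)"
    using multiquadric_powr_expansion[of c \<alpha> N] unfolding e_def by blast
  define shifted_bound where "shifted_bound n K \<longleftrightarrow>
    (\<forall>y t. 0 < y \<longrightarrow> 2 * T \<le> y \<longrightarrow> \<bar>t\<bar> \<le> T \<longrightarrow>
      \<bar>(y - t) powr e n - (\<Sum>i\<le>M - 2*n. (e n gchoose i) * (-t)^i * y powr (e n - real i))\<bar>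
        \<le> K * y powr (e n - real (Suc (M - 2*n))))" for n K
  have "\<exists>K. shifted_bound n K" for n
    unfolding shifted_bound_def by (rule shifted_powr_expansion[OF assms]) blast
  then obtain KA where KA: "\<And>n. shifted_bound n (KA n)"
    using choice[of shifted_bound] by blast
  have exponent: "e n - real (Suc (M - 2*n)) = E" if "n \<le> N" for n
    using that by (simp add: e_def E_def N_def of_nat_diff)
  show ?thesis
  proof (rule that, rule eventually_mono[OF eventually_ge_at_top], intro allI impI)
    fix y t :: real assume y: "2*T + 4*\<bar>c\<bar> + 1 \<le> y" and t: "\<bar>t\<bar> \<le> T"
    define z where "z = y - t"
    have y0: "0 < y" "1 \<le> y" "2 * T \<le> y" using y assms by auto
    have z: "0 < z" "y/2 \<le> z" "z \<le> 2*y" "2*\<bar>c\<bar> \<le> z" using y t assms by (auto simp: z_def)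
    then have "(2*\<bar>c\<bar>)^2 \<le> z^2" by (intro power_mono) auto
    then have zc: "2 * c^2 \<le> z^2" by (simp add: power_mult_distrib) (use zero_le_power2[of c] in linarith)
    have "\<bar>(z^2 + c^2) powr \<alpha> - (\<Sum>n\<le>N. (\<alpha> gchoose n) * c^(2*n) * z powr e n)\<bar>
        \<le> \<bar>KB\<bar> * z powr e (Suc N)"
      using KB[OF z(1) zc] by (intro order.trans[OF _ mult_right_mono[OF abs_ge_self]]) auto
    also have "\<dots> \<le> \<bar>KB\<bar> * (2 powr \<bar>e (Suc N)\<bar> * y powr e (Suc N))"
      using z y0 by (intro mult_left_mono powr_le_of_comparable_base) auto
    also have "\<dots> \<le> \<bar>KB\<bar> * (2 powr \<bar>e (Suc N)\<bar> * y powr E)"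
      using y0 by (intro mult_left_mono powr_mono) (auto simp: e_def E_def N_def)
    finally have far: "\<bar>(z^2 + c^2) powr \<alpha> - (\<Sum>n\<le>N. (\<alpha> gchoose n) * c^(2*n) * z powr e n)\<bar>
        \<le> (\<bar>KB\<bar> * 2 powr \<bar>e (Suc N)\<bar>) * y powr E"
      by (simp only: mult.assoc)
    show "\<bar>((t - y)^2 + c^2) powr \<alpha> - (\<Sum>m\<le>M. multiquadric_coeff c \<alpha> m t * y powr (2*\<alpha> - real m))\<bar>
        \<le> ((\<Sum>n\<le>N. \<bar>(\<alpha> gchoose n) * c^(2*n)\<bar> * KA n) + \<bar>KB\<bar> * 2 powr \<bar>e (Suc N)\<bar>)
            * y powr (2*\<alpha> - real (Suc M))"
      unfolding N_def E_def[symmetric]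
    proof (rule multiquadric_coeff_expansion_error)
      show "\<bar>(y - t) powr (2*\<alpha> - real (2*n)) - (\<Sum>i\<le>M - 2*n. ((2*\<alpha> - real (2*n)) gchoose i)
          * (-t)^i * y powr (2*\<alpha> - real (2*n) - real i))\<bar> \<le> KA n * y powr E"
        if "n \<le> M div 2" for n
        using KA[of n] y0 t exponent[of n] that unfolding shifted_bound_def e_def N_def by auto
      show "\<bar>((y - t)^2 + c^2) powr \<alpha> - (\<Sum>n\<le>M div 2. (\<alpha> gchoose n) * c^(2*n)
          * (y - t) powr (2*\<alpha> - real (2*n)))\<bar> \<le> \<bar>KB\<bar> * 2 powr \<bar>e (Suc (M div 2))\<bar> * y powr E"
        using far unfolding z_def e_def N_def .
    qed
  qed
qed

definition uniformly_approximable ::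
    "(nat \<Rightarrow> real \<Rightarrow> real) \<Rightarrow> real set \<Rightarrow> (real \<Rightarrow> real) \<Rightarrow> bool" where
  "uniformly_approximable \<phi> S g \<longleftrightarrow>
     (\<forall>\<eta>>0. \<exists>N coef. \<forall>t\<in>S. \<bar>g t - (\<Sum>j=1..N. coef j * \<phi> j t)\<bar> \<le> \<eta>)"

lemma uniformly_approximable_zero: "uniformly_approximable \<phi> S (\<lambda>t. 0)"
  unfolding uniformly_approximable_def by (intro allI impI exI[of _ 0]) simp

lemma uniformly_approximable_basis:
  assumes "1 \<le> j"
  shows "uniformly_approximable \<phi> S (\<phi> j)"
  unfolding uniformly_approximable_def
proof (intro allI impI exI[of _ j] exI[of _ "\<lambda>i. if i = j then 1 else 0"] ballI)
  fix \<eta> t :: real assume "\<eta> > 0"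
  moreover have "(\<Sum>i=1..j. (if i = j then 1 else 0) * \<phi> i t) = (\<Sum>i\<in>{1..j}. if i = j then \<phi> j t else 0)"
    by (intro sum.cong) auto
  ultimately show "\<bar>\<phi> j t - (\<Sum>i=1..j. (if i = j then 1 else 0) * \<phi> i t)\<bar> \<le> \<eta>"
    using assms by simp
qed

lemma uniformly_approximable_add:
  assumes "uniformly_approximable \<phi> S g" "uniformly_approximable \<phi> S h"
  shows "uniformly_approximable \<phi> S (\<lambda>t. g t + h t)"
  unfolding uniformly_approximable_def
proof (intro allI impI)
  fix \<eta> :: real assume "\<eta> > 0"
  then obtain N1 coef1 N2 coef2 where
    1: "\<forall>t\<in>S. \<bar>g t - (\<Sum>j=1..N1. coef1 j * \<phi> j t)\<bar> \<le> \<eta>/2" and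
    2: "\<forall>t\<in>S. \<bar>h t - (\<Sum>j=1..N2. coef2 j * \<phi> j t)\<bar> \<le> \<eta>/2"
    using assms unfolding uniformly_approximable_def by (meson half_gt_zero)
  define coef where "coef j = (if j \<le> N1 then coef1 j else 0) + (if j \<le> N2 then coef2 j else 0)" for j
  have pad: "(\<Sum>j=1..N. (if j \<le> M then a j else 0) * \<phi> j t) = (\<Sum>j=1..M. a j * \<phi> j t)"
    if "M \<le> N" for M N a t
    using that by (intro sum.mono_neutral_cong_right) auto
  have sum_coef: "(\<Sum>j=1..max N1 N2. coef j * \<phi> j t)
      = (\<Sum>j=1..N1. coef1 j * \<phi> j t) + (\<Sum>j=1..N2. coef2 j * \<phi> j t)" for t
    unfolding coef_def distrib_right sum.distrib pad[OF max.cobounded1] pad[OF max.cobounded2] ..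
  have "\<bar>g t + h t - (\<Sum>j=1..max N1 N2. coef j * \<phi> j t)\<bar> \<le> \<eta>" if "t \<in> S" for t
    using 1[rule_format, OF that] 2[rule_format, OF that] unfolding sum_coef by linarith
  then show "\<exists>N coef. \<forall>t\<in>S. \<bar>g t + h t - (\<Sum>j=1..N. coef j * \<phi> j t)\<bar> \<le> \<eta>" by blast
qed

lemma uniformly_approximable_cmult:
  assumes "uniformly_approximable \<phi> S g"
  shows "uniformly_approximable \<phi> S (\<lambda>t. r * g t)"
  unfolding uniformly_approximable_def
proof (intro allI impI)
  fix \<eta> :: real assume "\<eta> > 0"
  then have "\<eta> / (\<bar>r\<bar> + 1) > 0" by simp
  then obtain N coef where approx: "\<forall>t\<in>S. \<bar>g t - (\<Sum>j=1..N. coef j * \<phi> j t)\<bar> \<le> \<eta> / (\<bar>r\<bar> + 1)"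
    using assms unfolding uniformly_approximable_def by blast
  have "\<bar>r * g t - (\<Sum>j=1..N. (r * coef j) * \<phi> j t)\<bar> \<le> \<eta>" if "t \<in> S" for t
  proof -
    have "\<bar>r * g t - (\<Sum>j=1..N. (r * coef j) * \<phi> j t)\<bar> = \<bar>r\<bar> * \<bar>g t - (\<Sum>j=1..N. coef j * \<phi> j t)\<bar>"
      by (simp add: sum_distrib_left mult.assoc right_diff_distrib flip: abs_mult)
    also have "\<dots> \<le> (\<bar>r\<bar> + 1) * (\<eta> / (\<bar>r\<bar> + 1))"
      using approx that by (intro mult_mono) auto
    finally show ?thesis by simp
  qed
  then show "\<exists>N coef. \<forall>t\<in>S. \<bar>r * g t - (\<Sum>j=1..N. coef j * \<phi> j t)\<bar> \<le> \<eta>"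
    by (intro exI[of _ N] exI[of _ "\<lambda>j. r * coef j"]) blast
qed

lemma uniformly_approximable_diff:
  assumes "uniformly_approximable \<phi> S g" "uniformly_approximable \<phi> S h"
  shows "uniformly_approximable \<phi> S (\<lambda>t. g t - h t)"
  using uniformly_approximable_add[OF assms(1) uniformly_approximable_cmult[OF assms(2), of "-1"]]
  by simp

lemma uniformly_approximable_sum:
  assumes "\<And>i. i \<in> I \<Longrightarrow> uniformly_approximable \<phi> S (g i)"
  shows "uniformly_approximable \<phi> S (\<lambda>t. \<Sum>i\<in>I. g i t)"
proof (cases "finite I")
  case True
  then show ?thesis using assms
    by (induction I rule: finite_induct)
      (auto intro: uniformly_approximable_zero uniformly_approximable_add)
qed (simp add: uniformly_approximable_zero)

lemma uniformly_approximable_limit: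
  assumes "\<And>\<eta>. \<eta> > 0 \<Longrightarrow> \<exists>h. uniformly_approximable \<phi> S h \<and> (\<forall>t\<in>S. \<bar>g t - h t\<bar> \<le> \<eta>)"
  shows "uniformly_approximable \<phi> S g"
  unfolding uniformly_approximable_def
proof (intro allI impI)
  fix \<eta> :: real assume "\<eta> > 0"
  then have "\<eta>/2 > 0" by simp
  then obtain h where h: "uniformly_approximable \<phi> S h" and 1: "\<forall>t\<in>S. \<bar>g t - h t\<bar> \<le> \<eta>/2"
    using assms by blast
  obtain N coef where 2: "\<forall>t\<in>S. \<bar>h t - (\<Sum>j=1..N. coef j * \<phi> j t)\<bar> \<le> \<eta>/2"
    using h \<open>\<eta>/2 > 0\<close> unfolding uniformly_approximable_def by blast
  have "\<bar>g t - (\<Sum>j=1..N. coef j * \<phi> j t)\<bar> \<le> \<eta>" if "t \<in> S" for t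
    using 1[rule_format, OF that] 2[rule_format, OF that] by linarith
  then show "\<exists>N coef. \<forall>t\<in>S. \<bar>g t - (\<Sum>j=1..N. coef j * \<phi> j t)\<bar> \<le> \<eta>" by blast
qed

lemma filterlim_at_top_obtain_positive_index:
  fixes x :: "int \<Rightarrow> real"
  assumes "filterlim x at_top at_top" "eventually P at_top"
  obtains j :: nat where "1 \<le> j" "P (x (int j))"
proof -
  obtain n0 where "\<And>n. n \<ge> n0 \<Longrightarrow> P (x n)"
    using filterlim_iff[THEN iffD1, OF assms(1)] assms(2) unfolding eventually_at_top_linorder by blast
  then show ?thesis by (intro that[of "nat (max n0 1)"]) auto
qed

lemma expansion_coefficient_estimate:
  fixes v y C \<beta> :: real and a :: "nat \<Rightarrow> real"
  assumes "0 < y"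
    and "\<bar>v - (\<Sum>l\<le>m. a l * y powr (\<beta> - real l))\<bar> \<le> C * y powr (\<beta> - real (Suc m))"
  shows "\<bar>a m - y powr (real m - \<beta>) * (v - (\<Sum>l<m. y powr (\<beta> - real l) * a l))\<bar> \<le> C / y"
proof -
  have "(\<Sum>l\<le>m. a l * y powr (\<beta> - real l))
      = (\<Sum>l<m. y powr (\<beta> - real l) * a l) + a m * y powr (\<beta> - real m)"
    by (simp add: lessThan_Suc_atMost[symmetric] mult.commute)
  moreover have "y powr (real m - \<beta>) * (a m * y powr (\<beta> - real m)) = a m"
    using assms(1) by (simp add: mult.left_commute flip: powr_add)
  ultimately have "a m - y powr (real m - \<beta>) * (v - (\<Sum>l<m. y powr (\<beta> - real l) * a l))
      = - (y powr (real m - \<beta>) * (v - (\<Sum>l\<le>m. a l * y powr (\<beta> - real l))))"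
    by (simp only: right_diff_distrib distrib_left)
  then have "\<bar>a m - y powr (real m - \<beta>) * (v - (\<Sum>l<m. y powr (\<beta> - real l) * a l))\<bar>
      = y powr (real m - \<beta>) * \<bar>v - (\<Sum>l\<le>m. a l * y powr (\<beta> - real l))\<bar>"
    by (simp add: abs_mult)
  also have "\<dots> \<le> y powr (real m - \<beta>) * (C * y powr (\<beta> - real (Suc m)))"
    using assms(2) by (intro mult_left_mono) auto
  also have "\<dots> = C / y"
    using assms(1) by (simp add: powr_minus divide_inverse flip: powr_add)
  finally show ?thesis .
qed

lemma multiquadric_coeff_approximable:
  fixes x :: "int \<Rightarrow> real" and c \<alpha> :: real
  assumes x: "filterlim x at_top at_top" and S: "bounded S"
  shows "uniformly_approximable (\<lambda>j t. ((t - x (int j))^2 + c^2) powr \<alpha>) S (multiquadric_coeff c \<alpha> m)"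
proof (induction m rule: less_induct)
  case (less m)
  define \<phi> where "\<phi> j t = ((t - x (int j))^2 + c^2) powr \<alpha>" for j t
  obtain T where T: "T \<ge> 0" "\<And>t. t \<in> S \<Longrightarrow> \<bar>t\<bar> \<le> T"
    using S unfolding bounded_real by (meson abs_ge_zero order_trans)
  obtain C where C: "\<forall>\<^sub>F y in at_top. \<forall>t. \<bar>t\<bar> \<le> T \<longrightarrow>
      \<bar>((t - y)^2 + c^2) powr \<alpha> - (\<Sum>l\<le>m. multiquadric_coeff c \<alpha> l t * y powr (2*\<alpha> - real l))\<bar>
        \<le> C * y powr (2*\<alpha> - real (Suc m))"
    using multiquadric_asymptotic_expansion[OF T(1)] by blast
  show ?case
  proof (rule uniformly_approximable_limit)
    fix \<eta> :: real assume \<eta>: "\<eta> > 0"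
    have "\<forall>\<^sub>F y in at_top. 0 < y \<and> (\<bar>C\<bar> + 1) / \<eta> \<le> y \<and> (\<forall>t. \<bar>t\<bar> \<le> T \<longrightarrow>
      \<bar>((t - y)^2 + c^2) powr \<alpha> - (\<Sum>l\<le>m. multiquadric_coeff c \<alpha> l t * y powr (2*\<alpha> - real l))\<bar>
        \<le> C * y powr (2*\<alpha> - real (Suc m)))"
      by (intro eventually_conj eventually_gt_at_top eventually_ge_at_top C)
    from filterlim_at_top_obtain_positive_index[OF x this] obtain j where j: "1 \<le> j"
      and y: "0 < x (int j)" "(\<bar>C\<bar> + 1) / \<eta> \<le> x (int j)" and expansion: "\<forall>t. \<bar>t\<bar> \<le> T \<longrightarrow>
      \<bar>\<phi> j t - (\<Sum>l\<le>m. multiquadric_coeff c \<alpha> l t * x (int j) powr (2*\<alpha> - real l))\<bar>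
        \<le> C * x (int j) powr (2*\<alpha> - real (Suc m))"
      unfolding \<phi>_def by blast
    define h where "h t = x (int j) powr (real m - 2*\<alpha>) * (\<phi> j t -
        (\<Sum>l<m. x (int j) powr (2*\<alpha> - real l) * multiquadric_coeff c \<alpha> l t))" for t
    have "uniformly_approximable \<phi> S h"
      unfolding h_def using less[unfolded \<phi>_def[symmetric]]
      by (intro uniformly_approximable_cmult uniformly_approximable_diff uniformly_approximable_basis j
          uniformly_approximable_sum) simp
    moreover have "\<bar>multiquadric_coeff c \<alpha> m t - h t\<bar> \<le> \<eta>" if "t \<in> S" for t
    proof -
      have "\<bar>multiquadric_coeff c \<alpha> m t - h t\<bar> \<le> C / x (int j)"
        unfolding h_def using expansion T(2)[OF that]
        by (intro expansion_coefficient_estimate y(1)) auto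
      also have "\<dots> \<le> \<eta>"
        using y \<eta> by (simp add: divide_le_eq field_simps)
      finally show ?thesis .
    qed
    ultimately show "\<exists>h. uniformly_approximable (\<lambda>j t. ((t - x (int j))^2 + c^2) powr \<alpha>) S h \<and>
        (\<forall>t\<in>S. \<bar>multiquadric_coeff c \<alpha> m t - h t\<bar> \<le> \<eta>)"
      unfolding \<phi>_def by blast
  qed
qed

lemma gbinomial_half_integer_nonzero: "(real k - 1/2) gchoose n \<noteq> 0"
proof -
  have "real k - 1/2 - real i \<noteq> 0" for i
  proof
    assume "real k - 1/2 - real i = 0"
    then have "real (2*k) = real (2*i + 1)" by simp
    then have "2*k = 2*i + 1" by (simp only: of_nat_eq_iff)
    then show False by presburger
  qed
  then show ?thesis by (simp add: gbinomial_prod_rev prod_zero_iff)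
qed

lemma multiquadric_coeff_half_integer:
  fixes c :: real and k d :: nat
  obtains r where "\<And>t. multiquadric_coeff c (real k - 1/2) (2*k + d) t
      = ((real k - 1/2) gchoose k) * c^(2*k) * t^d + (\<Sum>n\<in>{Suc k..k + d div 2}. r n * t^(2*k + d - 2*n))"
proof -
  define \<alpha> where "\<alpha> = real k - 1/2"
  define r where "r n = (\<alpha> gchoose n) * c^(2*n) * ((2*\<alpha> - real (2*n)) gchoose (2*k + d - 2*n))
      * (-1)^(2*k + d - 2*n)" for n
  have summand: "(\<alpha> gchoose n) * c^(2*n) * ((2*\<alpha> - real (2*n)) gchoose (2*k + d - 2*n))
      * (-t)^(2*k + d - 2*n) = r n * t^(2*k + d - 2*n)" for n t
    unfolding r_def power_minus[of t] by (simp only: mult.assoc)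
  \<comment> \<open>For n < k the binomial has a natural upper entry 2k - 1 - 2n below its lower entry.\<close>
  have "r n = 0" if "n < k" for n
  proof -
    have "2*\<alpha> - real (2*n) = real (2*k - 1 - 2*n)" using that by (simp add: \<alpha>_def of_nat_diff)
    moreover have "(2*k - 1 - 2*n) choose (2*k + d - 2*n) = 0" using that by (intro binomial_eq_0) linarith
    ultimately show ?thesis by (simp add: r_def binomial_gbinomial[symmetric])
  qed
  moreover have "r k = (\<alpha> gchoose k) * c^(2*k)"
  proof -
    have "2*\<alpha> - real (2*k) = -1" by (simp add: \<alpha>_def)
    moreover have "(-1::real) gchoose d = (-1)^d"
      using gbinomial_minus[of "1::real" d] binomial_gbinomial[of d d, where 'a=real] by simp
    ultimately show ?thesis by (simp add: r_def flip: power_add)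
  qed
  moreover have "{k..k + d div 2} = insert k {Suc k..k + d div 2}" by auto
  ultimately have "multiquadric_coeff c \<alpha> (2*k + d) t
      = (\<alpha> gchoose k) * c^(2*k) * t^d + (\<Sum>n\<in>{Suc k..k + d div 2}. r n * t^(2*k + d - 2*n))" for t
    unfolding multiquadric_coeff_def summand
    by (subst sum.mono_neutral_right[of _ "{k..k + d div 2}"]) auto
  then show ?thesis unfolding \<alpha>_def by (rule that)
qed

lemma monomial_approximable_by_multiquadrics:
  fixes x :: "int \<Rightarrow> real" and c :: real and k :: nat
  assumes "c \<noteq> 0" "filterlim x at_top at_top" "bounded S"
  shows "uniformly_approximable (\<lambda>j t. mq c k (t - x (int j))) S (\<lambda>t. t^d)"
proof (induction d rule: less_induct)
  case (less d)
  define lead where "lead = ((real k - 1/2) gchoose k) * c^(2*k)"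
  obtain r where r: "\<And>t. multiquadric_coeff c (real k - 1/2) (2*k + d) t
      = lead * t^d + (\<Sum>n\<in>{Suc k..k + d div 2}. r n * t^(2*k + d - 2*n))"
    using multiquadric_coeff_half_integer[of c k d] unfolding lead_def by blast
  have "lead \<noteq> 0" using assms(1) gbinomial_half_integer_nonzero by (simp add: lead_def)
  then have "t^d = (1 / lead) * (multiquadric_coeff c (real k - 1/2) (2*k + d) t
      - (\<Sum>n\<in>{Suc k..k + d div 2}. r n * t^(2*k + d - 2*n)))" for t
    by (simp add: r)
  moreover have "uniformly_approximable (\<lambda>j t. mq c k (t - x (int j))) S
      (\<lambda>t. (1 / lead) * (multiquadric_coeff c (real k - 1/2) (2*k + d) t
        - (\<Sum>n\<in>{Suc k..k + d div 2}. r n * t^(2*k + d - 2*n))))"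
    using multiquadric_coeff_approximable[OF assms(2,3)] less
    by (intro uniformly_approximable_cmult uniformly_approximable_diff uniformly_approximable_sum)
      (auto simp: mq_def)
  ultimately show ?case by simp
qed

lemma polynomial_approximable_by_multiquadrics:
  fixes x :: "int \<Rightarrow> real" and c :: real and k :: nat
  assumes "c \<noteq> 0" "filterlim x at_top at_top" "bounded S" "real_polynomial_function g"
  shows "uniformly_approximable (\<lambda>j t. mq c k (t - x (int j))) S g"
proof -
  obtain q n where "g = (\<lambda>t. \<Sum>i\<le>n. q i * t^i)"
    using assms(4) real_polynomial_function_iff_sum by blast
  then show ?thesis
    by (simp only:) (intro uniformly_approximable_sum uniformly_approximable_cmult
        monomial_approximable_by_multiquadrics assms(1-3))
qed

lemma continuous_approximable_by_multiquadrics: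
  fixes x :: "int \<Rightarrow> real" and c :: real and k :: nat
  assumes "c \<noteq> 0" "filterlim x at_top at_top" "compact S" "continuous_on S f"
  shows "uniformly_approximable (\<lambda>j t. mq c k (t - x (int j))) S f"
proof (rule uniformly_approximable_limit)
  fix \<eta> :: real assume "\<eta> > 0"
  then obtain g where g: "real_polynomial_function g" "\<And>t. t \<in> S \<Longrightarrow> \<bar>f t - g t\<bar> < \<eta>"
    by (rule Stone_Weierstrass_real_polynomial_function[OF assms(3,4)]) auto
  moreover have "\<forall>t\<in>S. \<bar>f t - g t\<bar> \<le> \<eta>" using g(2) by (simp add: less_imp_le)
  ultimately show "\<exists>g. uniformly_approximable (\<lambda>j t. mq c k (t - x (int j))) S g \<and>
      (\<forall>t\<in>S. \<bar>f t - g t\<bar> \<le> \<eta>)"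
    using polynomial_approximable_by_multiquadrics[OF assms(1,2) compact_imp_bounded[OF assms(3)]]
    by blast
qed

lemma Lp_norm_on_le_of_bounded:
  assumes "a \<le> b" "0 < p" "0 \<le> \<delta>" "\<And>t. t \<in> {a..b} \<Longrightarrow> \<bar>h t\<bar> \<le> \<delta>"
  shows "Lp_norm_on p a b h \<le> \<delta> * (b - a) powr (1/p)"
proof -
  have "(LINT t:{a..b}|lborel. \<bar>h t\<bar> powr p) \<le> (LINT t:{a..b}|lborel. \<delta> powr p)"
    unfolding set_lebesgue_integral_def
  proof (rule integral_mono')
    show "integrable lborel (\<lambda>t. indicator {a..b} t *\<^sub>R \<delta> powr p)"
      using assms(1) by (intro integrable_scaleR_left integrable_real_indicator) auto
    show "0 \<le> indicator {a..b} t *\<^sub>R \<delta> powr p" for t by simp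
    show "indicator {a..b} t *\<^sub>R \<bar>h t\<bar> powr p \<le> indicator {a..b} t *\<^sub>R \<delta> powr p" for t
      using assms(2) assms(4)[of t] by (cases "t \<in> {a..b}") (auto intro: powr_mono2)
  qed
  also have "\<dots> = \<delta> powr p * (b - a)"
    using assms(1) by (simp add: set_integral_const)
  moreover have "0 \<le> (LINT t:{a..b}|lborel. \<bar>h t\<bar> powr p)"
    unfolding set_lebesgue_integral_def by (intro integral_nonneg_AE AE_I2) simp
  ultimately have "Lp_norm_on p a b h \<le> (\<delta> powr p * (b - a)) powr (1/p)"
    unfolding Lp_norm_on_def using assms(2) by (intro powr_mono2) auto
  also have "\<dots> = \<delta> * (b - a) powr (1/p)"
    using assms(1-3) by (simp add: powr_mult powr_powr)
  finally show ?thesis .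
qed

theorem corollary3p2:
  fixes c :: real and k :: nat and p :: real and x :: "int \<Rightarrow> real"
    and a b :: real and f :: "real \<Rightarrow> real" and \<epsilon> :: real
  assumes "c > 0" and "k \<ge> 1" and "1 \<le> p"
    and "scattered x"
    and "\<epsilon> > 0" and "continuous_on {a..b} f"
  shows "\<exists>(N::nat) (coef :: nat \<Rightarrow> real).
           Lp_norm_on p a b (\<lambda>t. f t - (\<Sum>j=1..N. coef j * mq c k (t - x (int j)))) < \<epsilon>"
proof (cases "a \<le> b")
  case False
  then have "Lp_norm_on p a b g = 0" for g
    by (simp add: Lp_norm_on_def set_lebesgue_integral_def)
  then show ?thesis using assms(5) by auto
next
  case True
  define \<delta> where "\<delta> = \<epsilon> / (2 * ((b - a) powr (1/p) + 1))"
  have "\<delta> > 0" using assms(5) by (simp add: \<delta>_def add_nonneg_pos)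
  moreover have "filterlim x at_top at_top" using assms(4) unfolding scattered_def by blast
  ultimately obtain N coef
    where approx: "\<forall>t\<in>{a..b}. \<bar>f t - (\<Sum>j=1..N. coef j * mq c k (t - x (int j)))\<bar> \<le> \<delta>"
    using continuous_approximable_by_multiquadrics[OF _ _ compact_Icc assms(6), of c x k] assms(1)
    unfolding uniformly_approximable_def by auto
  have "Lp_norm_on p a b (\<lambda>t. f t - (\<Sum>j=1..N. coef j * mq c k (t - x (int j))))
      \<le> \<delta> * (b - a) powr (1/p)"
    using approx True assms(3) \<open>\<delta> > 0\<close> by (intro Lp_norm_on_le_of_bounded) auto
  also have "\<dots> = \<epsilon> * ((b - a) powr (1/p) / (2 * ((b - a) powr (1/p) + 1)))"
    by (simp add: \<delta>_def)
  also have "\<dots> < \<epsilon> * 1"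
    using assms(5) by (intro mult_strict_left_mono) (simp_all add: divide_less_eq add_nonneg_pos)
  finally show ?thesis by auto
qed

end
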